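(* Under Assumptions (M), (P) and (L), there exists a deterministic constant $L_h'$ such that $\|h(w_1)-h(w_2)\|\le L_h'\|w_1-w_2\|$ for all $w_1,w_2\in\mathbb R^d$.
   Context: Let $\langle\cdot,\cdot\rangle$ be an inner product on $\mathbb R^d$ with induced norm $\|\cdot\|$. Let $\mathcal Y$ be a finite set and $H:\mathbb R^d\times\mathcal Y\to\mathbb R^d$. (M) There is a family $\{P_w:w\in\mathbb R^d\}$ of $|\mathcal Y|\times|\mathcal Y|$ stochastic matrices such that for every $P$ in the closure of this family, the time-homogeneous Markov chain with transition matrix $P$ is irreducible and aperiodic. Then each $P_w$ has a unique stationary distribution $d_{\mathcal Y,w}$; define $h(w)\doteq\sum_{y\in\mathcal Y}d_{\mathcal Y,w}(y)H(w,y)$. (P) There is a constant $C_P$ such that $\|P_{w_1}-P_{w_2}\|\le\frac{C_P}{1+\|w_1\|+\|w_2\|}\|w_1-w_2\|$ for all $w_1,w_2$ (for a fixed matrix norm). (L) There is a constant $L_h$ with $\|H(w_1,y)-H(w_2,y)\|\le L_h\|w_1-w_2\|$ and $\|H(0,y)\|\le L_h$ for all $w_1,w_2,y$. *)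

theory Defs
  imports "HOL-Analysis.Analysis"
begin

text \<open>Transition matrices on a finite state type 'y are functions 'y => 'y => real;
  entry (i,j) is the probability of moving from i to j.\<close>

definition stochastic :: "('y::finite \<Rightarrow> 'y \<Rightarrow> real) \<Rightarrow> bool" where
  "stochastic P \<longleftrightarrow> (\<forall>i j. 0 \<le> P i j) \<and> (\<forall>i. (\<Sum>j\<in>UNIV. P i j) = 1)"

fun mpow :: "('y::finite \<Rightarrow> 'y \<Rightarrow> real) \<Rightarrow> nat \<Rightarrow> 'y \<Rightarrow> 'y \<Rightarrow> real" where
  "mpow P 0 = (\<lambda>i j. if i = j then 1 else 0)"
| "mpow P (Suc n) = (\<lambda>i j. \<Sum>k\<in>UNIV. mpow P n i k * P k j)"

definition irreducible_chain :: "('y::finite \<Rightarrow> 'y \<Rightarrow> real) \<Rightarrow> bool" where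
  "irreducible_chain P \<longleftrightarrow> (\<forall>i j. \<exists>n. 0 < mpow P n i j)"

definition period :: "('y::finite \<Rightarrow> 'y \<Rightarrow> real) \<Rightarrow> 'y \<Rightarrow> nat" where
  "period P i = Gcd {n. 0 < n \<and> 0 < mpow P n i i}"

definition aperiodic_chain :: "('y::finite \<Rightarrow> 'y \<Rightarrow> real) \<Rightarrow> bool" where
  "aperiodic_chain P \<longleftrightarrow> (\<forall>i. period P i = 1)"

definition stationary_dist :: "('y::finite \<Rightarrow> real) \<Rightarrow> ('y \<Rightarrow> 'y \<Rightarrow> real) \<Rightarrow> bool" where
  "stationary_dist d P \<longleftrightarrow> (\<forall>y. 0 \<le> d y) \<and> (\<Sum>y\<in>UNIV. d y) = 1
      \<and> (\<forall>j. (\<Sum>i\<in>UNIV. d i * P i j) = d j)"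

text \<open>The (unique, under (M)) stationary distribution.\<close>
definition stat_dist :: "('y::finite \<Rightarrow> 'y \<Rightarrow> real) \<Rightarrow> 'y \<Rightarrow> real" where
  "stat_dist P = (THE d. stationary_dist d P)"

definition mat_norm :: "('y::finite \<Rightarrow> 'y \<Rightarrow> real) \<Rightarrow> real" where
  "mat_norm A = (\<Sum>i\<in>UNIV. \<Sum>j\<in>UNIV. \<bar>A i j\<bar>)"

definition hbar :: "('a \<Rightarrow> 'y::finite \<Rightarrow> 'y \<Rightarrow> real) \<Rightarrow> ('a \<Rightarrow> 'y \<Rightarrow> 'v::real_vector) \<Rightarrow> 'a \<Rightarrow> 'v" where
  "hbar P H w = (\<Sum>y\<in>UNIV. stat_dist (P w) y *\<^sub>R H w y)"

end

theory Submission
  imports Defs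
begin

(* Write d_w for the stationary distribution of P_w. A zero-sum vector x with x Q = x for an
   irreducible stochastic Q vanishes: the positive part of x is again invariant, hence positive
   everywhere or zero. Since the closure of {P_w} is compact and consists of irreducible chains,
   this becomes quantitative: c ||x||_1 <= ||x P_w - x||_1 for one c > 0, all w and all zero-sum x.
   For x = d_w1 - d_w2 one has x P_w2 - x = d_w1 (P_w2 - P_w1), so (P) gives
   (1 + ||w2||) ||d_w1 - d_w2||_1 <= (|C_P| / c) ||w1 - w2||. The factor 1 + ||w2|| absorbs the linear
   growth ||H(w,y)|| <= L_h (1 + ||w||) in
   h(w1) - h(w2) = sum_y d_w1(y) (H(w1,y) - H(w2,y)) + sum_y (d_w1(y) - d_w2(y)) H(w2,y). *)

definition left_invariant :: "('y::finite \<Rightarrow> real) \<Rightarrow> ('y \<Rightarrow> 'y \<Rightarrow> real) \<Rightarrow> bool" where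
  "left_invariant x Q \<longleftrightarrow> (\<forall>j. (\<Sum>i\<in>UNIV. x i * Q i j) = x j)"

definition invariance_defect :: "('y::finite \<Rightarrow> 'y \<Rightarrow> real) \<Rightarrow> ('y \<Rightarrow> real) \<Rightarrow> real" where
  "invariance_defect Q x = (\<Sum>j\<in>UNIV. \<bar>(\<Sum>i\<in>UNIV. x i * Q i j) - x j\<bar>)"

lemma stationary_dist_iff:
  "stationary_dist d Q \<longleftrightarrow> (\<forall>y. 0 \<le> d y) \<and> (\<Sum>y\<in>UNIV. d y) = 1 \<and> left_invariant d Q"
  by (simp add: stationary_dist_def left_invariant_def)

lemma invariance_defect_eq_0_iff: "invariance_defect Q x = 0 \<longleftrightarrow> left_invariant x Q"
  by (simp add: invariance_defect_def left_invariant_def sum_nonneg_eq_0_iff)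

lemma invariance_defect_pos_iff: "0 < invariance_defect Q x \<longleftrightarrow> \<not> left_invariant x Q"
proof -
  have "0 \<le> invariance_defect Q x" by (simp add: invariance_defect_def sum_nonneg)
  then show ?thesis using invariance_defect_eq_0_iff by force
qed

lemma invariance_defect_scale:
  "invariance_defect Q (\<lambda>i. a * x i) = \<bar>a\<bar> * invariance_defect Q x"
proof -
  have "\<bar>(\<Sum>i\<in>UNIV. a * x i * Q i j) - a * x j\<bar> = \<bar>a\<bar> * \<bar>(\<Sum>i\<in>UNIV. x i * Q i j) - x j\<bar>" for j
    by (simp add: mult.assoc abs_mult flip: sum_distrib_left right_diff_distrib)
  then show ?thesis by (simp add: invariance_defect_def sum_distrib_left)
qed

lemma mpow_nonneg: "stochastic Q \<Longrightarrow> 0 \<le> mpow Q n i j"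
  by (induction n arbitrary: j) (auto simp: stochastic_def intro!: sum_nonneg)

lemma left_invariant_mpow:
  assumes "left_invariant x Q"
  shows "(\<Sum>i\<in>UNIV. x i * mpow Q n i j) = x j"
proof (induction n arbitrary: j)
  case 0
  then show ?case by (simp add: if_distrib cong: if_cong)
next
  case (Suc n)
  have "(\<Sum>i\<in>UNIV. x i * mpow Q (Suc n) i j) = (\<Sum>i\<in>UNIV. \<Sum>k\<in>UNIV. x i * mpow Q n i k * Q k j)"
    by (simp add: sum_distrib_left mult.assoc)
  also have "\<dots> = (\<Sum>k\<in>UNIV. (\<Sum>i\<in>UNIV. x i * mpow Q n i k) * Q k j)"
    by (subst sum.swap) (simp add: sum_distrib_right)
  also have "\<dots> = x j" using Suc assms by (simp add: left_invariant_def)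
  finally show ?case .
qed

lemma left_invariant_abs:
  assumes st: "stochastic Q" and inv: "left_invariant x Q"
  shows "left_invariant (\<lambda>i. \<bar>x i\<bar>) Q"
proof -
  have Qnn: "\<And>i j. 0 \<le> Q i j" and rows: "\<And>i. (\<Sum>j\<in>UNIV. Q i j) = 1"
    using st by (auto simp: stochastic_def)
  define s where "s j = (\<Sum>i\<in>UNIV. \<bar>x i\<bar> * Q i j)" for j
  have le: "\<bar>x j\<bar> \<le> s j" for j
  proof -
    have "\<bar>x j\<bar> = \<bar>\<Sum>i\<in>UNIV. x i * Q i j\<bar>" using inv by (simp add: left_invariant_def)
    also have "\<dots> \<le> (\<Sum>i\<in>UNIV. \<bar>x i * Q i j\<bar>)" by (rule sum_abs)
    also have "\<dots> = s j" using Qnn by (simp add: s_def abs_mult)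
    finally show ?thesis .
  qed
  \<comment> \<open>Row sums are 1, so the two sides have the same total mass and the inequality is an equality.\<close>
  have "(\<Sum>j\<in>UNIV. s j) = (\<Sum>i\<in>UNIV. \<bar>x i\<bar>)"
    unfolding s_def by (subst sum.swap) (simp add: rows flip: sum_distrib_left)
  then have "(\<Sum>j\<in>UNIV. s j - \<bar>x j\<bar>) = 0" by (simp add: sum_subtractf)
  then have "\<forall>j. s j - \<bar>x j\<bar> = 0" using le by (simp add: sum_nonneg_eq_0_iff)
  then show ?thesis by (simp add: left_invariant_def s_def)
qed

lemma left_invariant_pos_everywhere:
  assumes st: "stochastic Q" and irr: "irreducible_chain Q"
    and inv: "left_invariant y Q" and nonneg: "\<forall>k. 0 \<le> y k" and pos: "0 < y i"
  shows "0 < y j"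
proof -
  obtain n where n: "0 < mpow Q n i j" using irr unfolding irreducible_chain_def by blast
  have "0 < y i * mpow Q n i j" using n pos by simp
  also have "\<dots> \<le> (\<Sum>k\<in>UNIV. y k * mpow Q n k j)"
    by (rule member_le_sum) (use nonneg mpow_nonneg[OF st] in auto)
  also have "\<dots> = y j" using left_invariant_mpow[OF inv] .
  finally show ?thesis .
qed

lemma left_invariant_sum_zero_nonpos:
  assumes st: "stochastic Q" and irr: "irreducible_chain Q"
    and inv: "left_invariant x Q" and sum0: "(\<Sum>k\<in>UNIV. x k) = 0"
  shows "x i \<le> 0"
proof (rule ccontr)
  assume "\<not> x i \<le> 0"
  \<comment> \<open>The positive part of x, scaled by 2, is again invariant.\<close>
  define y where "y k = \<bar>x k\<bar> + x k" for k
  have "left_invariant y Q"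
    using left_invariant_abs[OF st inv] inv
    by (simp add: left_invariant_def y_def distrib_right sum.distrib)
  moreover have "\<forall>k. 0 \<le> y k" and "0 < y i"
    using \<open>\<not> x i \<le> 0\<close> by (auto simp: y_def)
  ultimately have "0 < y j" for j using left_invariant_pos_everywhere[OF st irr] by blast
  then have "0 < x j" for j unfolding y_def by (smt (verit))
  then have "0 < (\<Sum>k\<in>UNIV. x k)" by (simp add: sum_pos)
  then show False using sum0 by simp
qed

lemma left_invariant_sum_zero:
  assumes st: "stochastic Q" and irr: "irreducible_chain Q"
    and inv: "left_invariant x Q" and sum0: "(\<Sum>k\<in>UNIV. x k) = 0"
  shows "x i = 0"
proof -
  have "left_invariant (\<lambda>k. - x k) Q" using inv by (simp add: left_invariant_def sum_negf)
  moreover have "(\<Sum>k\<in>UNIV. - x k) = 0" using sum0 by (simp add: sum_negf)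
  ultimately have "- x i \<le> 0" by (rule left_invariant_sum_zero_nonpos[OF st irr])
  then show ?thesis using left_invariant_sum_zero_nonpos[OF st irr inv sum0, of i] by linarith
qed

lemma stationary_dist_exists:
  fixes Q :: "'y::finite \<Rightarrow> 'y \<Rightarrow> real"
  assumes "stochastic Q"
  shows "\<exists>d. stationary_dist d Q"
proof -
  have Qnn: "\<And>i j. 0 \<le> Q i j" and rows: "\<And>i. (\<Sum>j\<in>UNIV. Q i j) = 1"
    using assms by (auto simp: stochastic_def)
  define T where "T = {v::real^'y. (\<forall>i. 0 \<le> v$i) \<and> (\<Sum>i\<in>UNIV. v$i) = 1}"
  define f where "f v = (\<chi> j. \<Sum>i\<in>UNIV. v$i * Q i j)" for v :: "real^'y"
  have "closed T" unfolding T_def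
    by (intro closed_Collect_conj closed_Collect_all closed_Collect_le closed_Collect_eq continuous_intros)
  moreover have "bounded T"
  proof -
    have "norm v \<le> 1" if "v \<in> T" for v
      using norm_le_l1_cart[of v] that by (simp add: T_def)
    then show ?thesis by (auto simp: bounded_iff)
  qed
  ultimately have "compact T" by (simp add: compact_eq_bounded_closed)
  moreover have "convex T" unfolding T_def convex_def
    by (auto simp: sum.distrib simp flip: sum_distrib_left)
  moreover have "(\<chi> i. 1 / real CARD('y)) \<in> T" by (simp add: T_def)
  then have "T \<noteq> {}" by blast
  moreover have "continuous_on T f" unfolding f_def by (intro continuous_intros)
  moreover have "f \<in> T \<rightarrow> T"
  proof
    fix v assume v: "v \<in> T"
    have "(\<Sum>j\<in>UNIV. \<Sum>i\<in>UNIV. v$i * Q i j) = (\<Sum>i\<in>UNIV. v$i * (\<Sum>j\<in>UNIV. Q i j))"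
      by (subst sum.swap) (simp add: sum_distrib_left)
    also have "\<dots> = 1" using rows v by (simp add: T_def)
    finally show "f v \<in> T" using v Qnn by (auto simp: T_def f_def intro!: sum_nonneg)
  qed
  ultimately obtain v where v: "v \<in> T" "f v = v" using brouwer by metis
  have "stationary_dist (\<lambda>i. v$i) Q"
    unfolding stationary_dist_iff left_invariant_def
    using v by (auto simp: T_def f_def vec_eq_iff)
  then show ?thesis by blast
qed

lemma stationary_dist_unique:
  assumes "stochastic Q" "irreducible_chain Q" "stationary_dist d Q" "stationary_dist e Q"
  shows "d = e"
proof
  fix i
  have "left_invariant (\<lambda>k. d k - e k) Q" "(\<Sum>k\<in>UNIV. d k - e k) = 0"
    using assms(3,4)
    by (auto simp: stationary_dist_iff left_invariant_def left_diff_distrib sum_subtractf)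
  then show "d i = e i" using left_invariant_sum_zero[OF assms(1,2)] by fastforce
qed

lemma stationary_dist_stat_dist:
  assumes "stochastic Q" "irreducible_chain Q"
  shows "stationary_dist (stat_dist Q) Q"
  using stationary_dist_exists[OF assms(1)] stationary_dist_unique[OF assms]
  unfolding stat_dist_def by (metis theI)

lemma closed_stochastic: "closed {Q :: 'y::finite \<Rightarrow> 'y \<Rightarrow> real. stochastic Q}"
  unfolding stochastic_def Collect_conj_eq
  by (intro closed_Int closed_Collect_all closed_Collect_le closed_Collect_eq continuous_intros
      continuous_on_product_then_coordinatewise[OF continuous_on_product_coordinates])

lemma compact_pos_uniform_lower_bound:
  fixes g :: "'a::topological_space \<Rightarrow> real"
  assumes "compact T" "continuous_on T g" "\<forall>z\<in>T. 0 < g z"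
  obtains c where "0 < c" "\<forall>z\<in>T. c \<le> g z"
proof (cases "T = {}")
  case False
  then obtain z where "z \<in> T" "\<forall>z'\<in>T. g z \<le> g z'"
    using continuous_attains_inf[OF assms(1) False assms(2)] by blast
  then show ?thesis using that assms(3) by blast
qed (use that zero_less_one in blast)

lemma stochastic_closure:
  assumes "\<forall>Q\<in>\<Q>. stochastic Q" and "Q \<in> closure \<Q>"
  shows "stochastic Q"
  using closure_minimal[of \<Q> "{Q. stochastic Q}"] closed_stochastic assms by auto

lemma compact_matrices_in_closure:
  fixes \<Q> :: "('y::finite \<Rightarrow> 'y \<Rightarrow> real) set"
  assumes "\<forall>Q\<in>\<Q>. stochastic Q"
  shows "compact ((\<lambda>A :: real^'y^'y. \<lambda>i j. A$i$j) -` closure \<Q>)" (is "compact ?K")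
proof -
  have "closed ?K" by (intro closed_vimage closed_closure continuous_intros)
  moreover have "norm A \<le> real CARD('y)" if "A \<in> ?K" for A
  proof -
    have "norm A \<le> (\<Sum>i\<in>UNIV. norm (A$i))" by (simp add: norm_vec_def L2_set_le_sum)
    also have "\<dots> \<le> (\<Sum>i\<in>UNIV. \<Sum>j\<in>UNIV. \<bar>A$i$j\<bar>)" by (intro sum_mono norm_le_l1_cart)
    also have "\<dots> = real CARD('y)"
      using stochastic_closure[OF assms, of "\<lambda>i j. A$i$j"] that by (simp add: stochastic_def)
    finally show ?thesis .
  qed
  then have "bounded ?K" by (auto simp: bounded_iff)
  ultimately show ?thesis by (simp add: compact_eq_bounded_closed)
qed

lemma compact_sum_zero_l1_sphere:
  "compact {v :: real^'n. (\<Sum>i\<in>UNIV. v$i) = 0 \<and> (\<Sum>i\<in>UNIV. \<bar>v$i\<bar>) = 1}" (is "compact ?S")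
proof -
  have "closed ?S" by (intro closed_Collect_conj closed_Collect_eq continuous_intros)
  moreover have "norm v \<le> 1" if "v \<in> ?S" for v
    using norm_le_l1_cart[of v] that by simp
  then have "bounded ?S" by (auto simp: bounded_iff)
  ultimately show ?thesis by (simp add: compact_eq_bounded_closed)
qed

lemma uniform_invariance_defect_bound:
  fixes \<Q> :: "('y::finite \<Rightarrow> 'y \<Rightarrow> real) set"
  assumes stoch: "\<forall>Q\<in>\<Q>. stochastic Q" and irr: "\<forall>Q\<in>closure \<Q>. irreducible_chain Q"
  obtains c where "0 < c"
    "\<And>Q x. Q \<in> \<Q> \<Longrightarrow> (\<Sum>i\<in>UNIV. x i) = 0 \<Longrightarrow> c * (\<Sum>i\<in>UNIV. \<bar>x i\<bar>) \<le> invariance_defect Q x"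
proof -
  \<comment> \<open>Heine-Borel is available for real^'y^'y, not for the function space.\<close>
  define K where "K = (\<lambda>A :: real^'y^'y. \<lambda>i j. A$i$j) -` closure \<Q>"
  define S where "S = {v :: real^'y. (\<Sum>i\<in>UNIV. v$i) = 0 \<and> (\<Sum>i\<in>UNIV. \<bar>v$i\<bar>) = 1}"
  define g where "g z = invariance_defect (\<lambda>i j. fst z $ i $ j) (\<lambda>i. snd z $ i)"
    for z :: "(real^'y^'y) \<times> (real^'y)"
  have "compact (K \<times> S)"
    unfolding K_def S_def
    by (intro compact_Times compact_matrices_in_closure compact_sum_zero_l1_sphere stoch)
  moreover have "continuous_on (K \<times> S) g"
    unfolding g_def invariance_defect_def by (intro continuous_intros)
  moreover have "\<forall>z\<in>K \<times> S. 0 < g z"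
  proof
    fix z assume "z \<in> K \<times> S"
    then obtain A v where z: "z = (A, v)" and A: "(\<lambda>i j. A$i$j) \<in> closure \<Q>" and v: "v \<in> S"
      by (auto simp: K_def)
    have "\<not> left_invariant (\<lambda>i. v$i) (\<lambda>i j. A$i$j)"
    proof
      assume "left_invariant (\<lambda>i. v$i) (\<lambda>i j. A$i$j)"
      then have "v$i = 0" for i
        using left_invariant_sum_zero[OF stochastic_closure[OF stoch A]] irr A v by (auto simp: S_def)
      then show False using v by (simp add: S_def)
    qed
    then show "0 < g z" by (simp add: g_def z invariance_defect_pos_iff)
  qed
  ultimately obtain c where c: "0 < c" "\<forall>z\<in>K \<times> S. c \<le> g z"
    by (rule compact_pos_uniform_lower_bound)
  show ?thesis
  proof (rule that[OF c(1)])
    fix Q and x :: "'y \<Rightarrow> real" assume Q: "Q \<in> \<Q>" and sum0: "(\<Sum>i\<in>UNIV. x i) = 0"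
    define n where "n = (\<Sum>i\<in>UNIV. \<bar>x i\<bar>)"
    show "c * n \<le> invariance_defect Q x"
    proof (cases "n = 0")
      case False
      then have "0 < n" by (simp add: n_def order_less_le sum_nonneg)
      have "(\<chi> i j. Q i j, \<chi> i. x i / n) \<in> K \<times> S"
        using Q closure_subset \<open>0 < n\<close> sum0
        by (auto simp: K_def S_def n_def vec_lambda_inverse simp flip: sum_divide_distrib)
      then have "c \<le> g (\<chi> i j. Q i j, \<chi> i. x i / n)" using c(2) by blast
      also have "\<dots> = invariance_defect Q (\<lambda>i. inverse n * x i)"
        by (simp add: g_def divide_inverse_commute vec_lambda_inverse)
      also have "\<dots> = invariance_defect Q x / n"
        using \<open>0 < n\<close> by (simp only: invariance_defect_scale) (simp add: divide_inverse_commute)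
      finally show ?thesis using \<open>0 < n\<close> by (simp add: pos_le_divide_eq mult.commute)
    qed (simp add: invariance_defect_def sum_nonneg)
  qed
qed

lemma invariance_defect_stationary_diff_le:
  assumes d1: "stationary_dist d1 Q1" and d2: "stationary_dist d2 Q2"
  shows "invariance_defect Q2 (\<lambda>i. d1 i - d2 i) \<le> mat_norm (\<lambda>i j. Q1 i j - Q2 i j)"
proof -
  have d1_bounds: "0 \<le> d1 i" "d1 i \<le> 1" for i
  proof -
    show "0 \<le> d1 i" using d1 by (simp add: stationary_dist_def)
    have "d1 i \<le> (\<Sum>k\<in>UNIV. d1 k)" by (rule member_le_sum) (use d1 in \<open>auto simp: stationary_dist_def\<close>)
    then show "d1 i \<le> 1" using d1 by (simp add: stationary_dist_def)
  qed
  have "\<bar>(\<Sum>i\<in>UNIV. (d1 i - d2 i) * Q2 i j) - (d1 j - d2 j)\<bar> \<le> (\<Sum>i\<in>UNIV. \<bar>Q1 i j - Q2 i j\<bar>)" for j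
  proof -
    have "(\<Sum>i\<in>UNIV. (d1 i - d2 i) * Q2 i j) - (d1 j - d2 j) = (\<Sum>i\<in>UNIV. d1 i * (Q2 i j - Q1 i j))"
      using d1 d2 by (simp add: stationary_dist_def left_diff_distrib right_diff_distrib sum_subtractf)
    also have "\<bar>\<dots>\<bar> \<le> (\<Sum>i\<in>UNIV. \<bar>d1 i * (Q2 i j - Q1 i j)\<bar>)" by (rule sum_abs)
    also have "\<dots> = (\<Sum>i\<in>UNIV. d1 i * \<bar>Q1 i j - Q2 i j\<bar>)"
      using d1_bounds(1) by (simp add: abs_mult abs_minus_commute)
    also have "\<dots> \<le> (\<Sum>i\<in>UNIV. \<bar>Q1 i j - Q2 i j\<bar>)"
      by (intro sum_mono mult_left_le_one_le) (auto simp: d1_bounds)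
    finally show ?thesis .
  qed
  then have "invariance_defect Q2 (\<lambda>i. d1 i - d2 i) \<le> (\<Sum>j\<in>UNIV. \<Sum>i\<in>UNIV. \<bar>Q1 i j - Q2 i j\<bar>)"
    unfolding invariance_defect_def by (rule sum_mono)
  also have "\<dots> = mat_norm (\<lambda>i j. Q1 i j - Q2 i j)"
    unfolding mat_norm_def by (rule sum.swap)
  finally show ?thesis .
qed

lemma norm_weighted_sums_diff_le:
  fixes F G :: "'y::finite \<Rightarrow> 'v::real_normed_vector"
  assumes d: "\<forall>y. 0 \<le> d y" "(\<Sum>y\<in>UNIV. d y) = 1"
    and FG: "\<forall>y. norm (F y - G y) \<le> a" and G: "\<forall>y. norm (G y) \<le> b"
  shows "norm ((\<Sum>y\<in>UNIV. d y *\<^sub>R F y) - (\<Sum>y\<in>UNIV. e y *\<^sub>R G y))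
           \<le> a + (\<Sum>y\<in>UNIV. \<bar>d y - e y\<bar>) * b"
proof -
  have "(\<Sum>y\<in>UNIV. d y *\<^sub>R F y) - (\<Sum>y\<in>UNIV. e y *\<^sub>R G y)
      = (\<Sum>y\<in>UNIV. d y *\<^sub>R (F y - G y)) + (\<Sum>y\<in>UNIV. (d y - e y) *\<^sub>R G y)"
    by (simp add: scaleR_diff_right scaleR_diff_left sum_subtractf)
  also have "norm \<dots> \<le> (\<Sum>y\<in>UNIV. d y * a) + (\<Sum>y\<in>UNIV. \<bar>d y - e y\<bar> * b)"
    by (intro norm_triangle_le add_mono order_trans[OF norm_sum] sum_mono)
      (use d FG G in \<open>auto intro: mult_mono\<close>)
  also have "\<dots> = a + (\<Sum>y\<in>UNIV. \<bar>d y - e y\<bar>) * b"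
    using d by (simp flip: sum_distrib_right)
  finally show ?thesis .
qed

lemma one_plus_mult_le_abs_mult:
  fixes a b t x C :: real
  assumes "0 \<le> a" "0 \<le> b" "0 \<le> t" "x \<le> C / (1 + a + b) * t"
  shows "(1 + b) * x \<le> \<bar>C\<bar> * t"
proof -
  define q where "q = (1 + b) / (1 + a + b)"
  have q: "0 \<le> q" "q \<le> 1" using assms(1,2) by (auto simp: q_def)
  have "(1 + b) * x \<le> (1 + b) * (C / (1 + a + b) * t)"
    using assms(2,4) by (intro mult_left_mono) auto
  also have "\<dots> = q * (C * t)" by (simp add: q_def)
  also have "\<dots> \<le> q * \<bar>C * t\<bar>" using q by (intro mult_left_mono) auto
  also have "\<dots> \<le> \<bar>C\<bar> * t" using q assms(3) by (simp add: abs_mult mult_left_le_one_le)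
  finally show ?thesis .
qed
lemma stationary_dist_stat_dist_family:
  assumes "\<forall>w. stochastic (P w)" and "\<forall>Q\<in>closure (range P). irreducible_chain Q"
  shows "stationary_dist (stat_dist (P w)) (P w)"
proof (rule stationary_dist_stat_dist)
  show "stochastic (P w)" using assms(1) by blast
  show "irreducible_chain (P w)" using assms(2) closure_subset[of "range P"] by auto
qed

lemma stat_dist_weighted_lipschitz:
  fixes P :: "'a::real_normed_vector \<Rightarrow> 'y::finite \<Rightarrow> 'y \<Rightarrow> real"
  assumes stoch: "\<forall>w. stochastic (P w)" and irr: "\<forall>Q\<in>closure (range P). irreducible_chain Q"
    and Pcond: "\<forall>w1 w2. mat_norm (\<lambda>i j. P w1 i j - P w2 i j)
                   \<le> C_P / (1 + norm w1 + norm w2) * norm (w1 - w2)"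
  obtains K where "\<And>w1 w2. (1 + norm w2) * (\<Sum>y\<in>UNIV. \<bar>stat_dist (P w1) y - stat_dist (P w2) y\<bar>)
                              \<le> K * norm (w1 - w2)"
proof -
  obtain c where "0 < c" and c: "\<And>Q x. Q \<in> range P \<Longrightarrow> (\<Sum>i\<in>UNIV. x i) = 0 \<Longrightarrow>
      c * (\<Sum>i\<in>UNIV. \<bar>x i\<bar>) \<le> invariance_defect Q x"
    using uniform_invariance_defect_bound[of "range P", OF _ irr] stoch by blast
  have stat: "stationary_dist (stat_dist (P w)) (P w)" for w
    using stationary_dist_stat_dist_family[OF stoch irr] .
  have "(1 + norm w2) * (\<Sum>y\<in>UNIV. \<bar>stat_dist (P w1) y - stat_dist (P w2) y\<bar>)
          \<le> \<bar>C_P\<bar> / c * norm (w1 - w2)" for w1 w2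
  proof -
    let ?x = "\<lambda>y. stat_dist (P w1) y - stat_dist (P w2) y"
    have "(\<Sum>y\<in>UNIV. ?x y) = 0"
      using stat by (simp add: stationary_dist_def sum_subtractf)
    then have "c * (\<Sum>y\<in>UNIV. \<bar>?x y\<bar>) \<le> invariance_defect (P w2) ?x"
      by (rule c[OF rangeI])
    also have "\<dots> \<le> mat_norm (\<lambda>i j. P w1 i j - P w2 i j)"
      by (rule invariance_defect_stationary_diff_le[OF stat stat])
    also have "\<dots> \<le> C_P / (1 + norm w1 + norm w2) * norm (w1 - w2)" using Pcond by blast
    finally have "(1 + norm w2) * (c * (\<Sum>y\<in>UNIV. \<bar>?x y\<bar>)) \<le> \<bar>C_P\<bar> * norm (w1 - w2)"
      by (rule one_plus_mult_le_abs_mult[rotated 3]) simp_all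
    then show ?thesis using \<open>0 < c\<close> by (simp add: field_simps)
  qed
  then show ?thesis using that by blast
qed

lemma norm_le_linear_growth:
  fixes H :: "'a::real_normed_vector \<Rightarrow> 'y \<Rightarrow> 'b::real_normed_vector"
  assumes "\<forall>w1 w2 y. norm (H w1 y - H w2 y) \<le> L * norm (w1 - w2)" and "\<forall>y. norm (H 0 y) \<le> L"
  shows "norm (H w y) \<le> L * (1 + norm w)"
proof -
  have "norm (H w y) \<le> norm (H 0 y) + norm (H w y - H 0 y)" by (rule norm_triangle_sub)
  also have "\<dots> \<le> L + L * norm (w - 0)"
    using assms(2) assms(1)[rule_format, of w y 0] by (intro add_mono) simp_all
  finally show ?thesis by (simp add: algebra_simps)
qed

theorem mainTheorem11:
  fixes P :: "'a::euclidean_space \<Rightarrow> 'y::finite \<Rightarrow> 'y \<Rightarrow> real"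
    and H :: "'a \<Rightarrow> 'y \<Rightarrow> 'a"
    and C_P L_h :: real
  assumes stoch: "\<forall>w. stochastic (P w)"
    and M: "\<forall>Q \<in> closure (range P). irreducible_chain Q \<and> aperiodic_chain Q"
    and Pcond: "\<forall>w1 w2. mat_norm (\<lambda>i j. P w1 i j - P w2 i j)
                   \<le> C_P / (1 + norm w1 + norm w2) * norm (w1 - w2)"
    and L1: "\<forall>w1 w2 y. norm (H w1 y - H w2 y) \<le> L_h * norm (w1 - w2)"
    and L2: "\<forall>y. norm (H 0 y) \<le> L_h"
  shows "\<exists>L_h'. \<forall>w1 w2. norm (hbar P H w1 - hbar P H w2) \<le> L_h' * norm (w1 - w2)"
proof -
  have irr: "\<forall>Q \<in> closure (range P). irreducible_chain Q" using M by blast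
  obtain K where K: "\<And>w1 w2. (1 + norm w2) * (\<Sum>y\<in>UNIV. \<bar>stat_dist (P w1) y - stat_dist (P w2) y\<bar>)
                              \<le> K * norm (w1 - w2)"
    using stat_dist_weighted_lipschitz[OF stoch irr Pcond] by blast
  have "0 \<le> L_h" using order_trans[OF norm_ge_zero L2[rule_format]] .
  have "norm (hbar P H w1 - hbar P H w2) \<le> (L_h + L_h * K) * norm (w1 - w2)" for w1 w2
  proof -
    let ?\<delta> = "\<Sum>y\<in>UNIV. \<bar>stat_dist (P w1) y - stat_dist (P w2) y\<bar>"
    have "norm (hbar P H w1 - hbar P H w2) \<le> L_h * norm (w1 - w2) + ?\<delta> * (L_h * (1 + norm w2))"
      unfolding hbar_def
    proof (rule norm_weighted_sums_diff_le)
      show "\<forall>y. 0 \<le> stat_dist (P w1) y" "(\<Sum>y\<in>UNIV. stat_dist (P w1) y) = 1"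
        using stationary_dist_stat_dist_family[OF stoch irr, of w1] by (simp_all add: stationary_dist_def)
      show "\<forall>y. norm (H w1 y - H w2 y) \<le> L_h * norm (w1 - w2)" using L1 by blast
      show "\<forall>y. norm (H w2 y) \<le> L_h * (1 + norm w2)" using norm_le_linear_growth[OF L1 L2] by blast
    qed
    also have "\<dots> \<le> L_h * norm (w1 - w2) + L_h * (K * norm (w1 - w2))"
      using mult_left_mono[OF K \<open>0 \<le> L_h\<close>] by (simp add: algebra_simps)
    finally show ?thesis by (simp add: algebra_simps)
  qed
  then show ?thesis by blast
qed

end
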